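(* For every time $t$, let $C_t=\mathcal{K}-b_t$ and let $g_t(\theta)=(\mathbb{1}\{y_t\le b_t^{\alpha}+\theta^{\alpha}\}-\alpha)_{\alpha\in\mathcal{A}}$ be the gradient of the MultiQT loss $\ell_t(\theta)=\sum_{\alpha\in\mathcal{A}}\rho_\alpha(b_t^{\alpha}+\theta^{\alpha},y_t)$. Then $-g_t(\theta)\in T_{C_t}(\theta)$ for all $\theta$ on the boundary of $C_t$; i.e., $(\ell_t,C_t)$ satisfies inward flow.
   Context: $\mathcal{A}=\{\alpha_1<\dots<\alpha_m\}\subset(0,1)$; $\mathcal{K}=\{x\in\mathbb{R}^m:x_1\le\dots\le x_m\}$; base forecasts $b_t\in\mathcal{K}$, outcomes $y_t\in\mathbb{R}$; $C-v=\{x-v:x\in C\}$. Quantile loss $\rho_\alpha(\hat y,y)=\alpha|y-\hat y|$ if $y\ge\hat y$ and $(1-\alpha)|y-\hat y|$ otherwise. Tangent cone $T_C(x)=\mathrm{cl}\{y:\exists\beta>0,\ x+\varepsilon y\in C\ \forall\varepsilon\in[0,\beta]\}$. *)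

theory Defs
  imports "HOL-Analysis.Analysis"
begin

text \<open>Quantile levels are indexed by a finite linearly ordered type 'n (so m = CARD('n));
  vectors in R^m are elements of real^'n.\<close>

definition monotone_cone :: "(real ^ 'n::{finite,linorder}) set" where
  "monotone_cone = {x. \<forall>i j. i \<le> j \<longrightarrow> x $ i \<le> x $ j}"

definition set_shift :: "('a::ab_group_add) set \<Rightarrow> 'a \<Rightarrow> 'a set" where
  "set_shift C v = {x - v | x. x \<in> C}"

definition tangent_cone :: "('a::real_normed_vector) set \<Rightarrow> 'a \<Rightarrow> 'a set" where
  "tangent_cone C x = closure {y. \<exists>\<beta>>0. \<forall>\<epsilon>\<in>{0..\<beta>}. x + \<epsilon> *\<^sub>R y \<in> C}"

definition quantile_loss :: "real \<Rightarrow> real \<Rightarrow> real \<Rightarrow> real" where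
  "quantile_loss \<alpha> yhat y = (if y \<ge> yhat then \<alpha> * \<bar>y - yhat\<bar> else (1 - \<alpha>) * \<bar>y - yhat\<bar>)"

definition multiqt_loss :: "('n::{finite,linorder} \<Rightarrow> real) \<Rightarrow> real ^ ('n::{finite,linorder}) \<Rightarrow> real \<Rightarrow> real ^ ('n::{finite,linorder}) \<Rightarrow> real" where
  "multiqt_loss \<alpha> b y \<theta> = (\<Sum>i\<in>UNIV. quantile_loss (\<alpha> i) (b $ i + \<theta> $ i) y)"

definition multiqt_grad :: "('n::{finite,linorder} \<Rightarrow> real) \<Rightarrow> real ^ ('n::{finite,linorder}) \<Rightarrow> real \<Rightarrow> real ^ ('n::{finite,linorder}) \<Rightarrow> real ^ ('n::{finite,linorder})" where
  "multiqt_grad \<alpha> b y \<theta> = (\<chi> i. (if y \<le> b $ i + \<theta> $ i then 1 else 0) - \<alpha> i)"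

end

theory Submission
  imports Defs
begin

text \<open>Translating the problem by \<open>b\<close>, it suffices to show that \<open>d = - multiqt_grad \<alpha> b y \<theta>\<close> is a
  feasible direction of the monotone cone at \<open>x = b + \<theta>\<close>. A chain constraint \<open>x$i \<le> x$j\<close> that is
  strict survives any small step, whatever \<open>d\<close> is; a tight one, \<open>x$i = x$j\<close> with \<open>i \<le> j\<close>, survives
  because both coordinates have the same indicator \<open>y \<le> x$i\<close>, so \<open>d$i - d$j = \<alpha> i - \<alpha> j \<le> 0\<close>.\<close>

lemma closed_monotone_cone: "closed (monotone_cone :: (real ^ 'n::{finite,linorder}) set)"
proof -
  have "monotone_cone = (\<Inter>i. \<Inter>j. {x. i \<le> j \<longrightarrow> x $ i \<le> x $ j})"
    unfolding monotone_cone_def by auto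
  also have "closed \<dots>"
    by (intro closed_INT ballI closed_Collect_imp closed_Collect_le continuous_on_component
        continuous_on_id) auto
  finally show ?thesis .
qed

lemma mem_set_shift: "z \<in> set_shift C v \<longleftrightarrow> v + z \<in> C"
  unfolding set_shift_def by (auto intro: exI[of _ "v + z"])

lemma closed_set_shift:
  fixes C :: "'a::real_normed_vector set"
  assumes "closed C"
  shows "closed (set_shift C v)"
proof -
  have shift_eq: "set_shift C v = (+) (- v) ` C"
    unfolding set_shift_def by auto
  show ?thesis
    unfolding shift_eq by (rule closed_translation[OF assms])
qed

lemma tangent_cone_set_shift:
  fixes C :: "'a::real_normed_vector set"
  shows "tangent_cone (set_shift C v) x = tangent_cone C (v + x)"
  unfolding tangent_cone_def mem_set_shift by (simp add: add.assoc)

lemma tangent_coneI_eventually: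
  fixes C :: "'a::real_normed_vector set"
  assumes "x \<in> C" and "eventually (\<lambda>\<epsilon>. x + \<epsilon> *\<^sub>R d \<in> C) (at_right 0)"
  shows "d \<in> tangent_cone C x"
proof -
  obtain \<beta> where "\<beta> > 0" and step: "\<And>\<epsilon>. 0 < \<epsilon> \<Longrightarrow> \<epsilon> < \<beta> \<Longrightarrow> x + \<epsilon> *\<^sub>R d \<in> C"
    using assms(2) unfolding eventually_at_right_field by blast
  have "x + \<epsilon> *\<^sub>R d \<in> C" if "\<epsilon> \<in> {0..\<beta>/2}" for \<epsilon>
  proof (cases "\<epsilon> = 0")
    case True
    with assms(1) show ?thesis by simp
  next
    case False
    with that \<open>\<beta> > 0\<close> show ?thesis by (intro step) auto
  qed
  with \<open>\<beta> > 0\<close> have "d \<in> {d. \<exists>\<beta>>0. \<forall>\<epsilon>\<in>{0..\<beta>}. x + \<epsilon> *\<^sub>R d \<in> C}"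
    by (intro CollectI exI[of _ "\<beta>/2"]) simp
  then show ?thesis
    unfolding tangent_cone_def by (rule closure_subset[THEN subsetD])
qed

lemma monotone_cone_eventually_feasible:
  fixes x d :: "real ^ 'n::{finite,linorder}"
  assumes "x \<in> monotone_cone"
    and ties: "\<And>i j. i \<le> j \<Longrightarrow> x $ i = x $ j \<Longrightarrow> d $ i \<le> d $ j"
  shows "eventually (\<lambda>\<epsilon>. x + \<epsilon> *\<^sub>R d \<in> monotone_cone) (at_right 0)"
proof -
  have pair: "eventually (\<lambda>\<epsilon>. i \<le> j \<longrightarrow> (x + \<epsilon> *\<^sub>R d) $ i \<le> (x + \<epsilon> *\<^sub>R d) $ j) (at_right 0)"
    for i j
  proof (cases "x $ i < x $ j")
    case True
    have "((\<lambda>\<epsilon>. x $ j + \<epsilon> * d $ j - (x $ i + \<epsilon> * d $ i)) \<longlongrightarrow> x $ j - x $ i) (at_right 0)"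
      by (auto intro!: tendsto_eq_intros)
    moreover have "0 < x $ j - x $ i"
      using True by simp
    ultimately show ?thesis
      by (rule order_tendstoD(1)[THEN eventually_mono]) simp
  next
    case False
    have "x $ i = x $ j" if "i \<le> j"
      using False that assms(1) unfolding monotone_cone_def by force
    with ties show ?thesis
      by (auto intro: eventually_mono[OF eventually_at_right_less] mult_left_mono)
  qed
  have "eventually (\<lambda>\<epsilon>. \<forall>i j. i \<le> j \<longrightarrow> (x + \<epsilon> *\<^sub>R d) $ i \<le> (x + \<epsilon> *\<^sub>R d) $ j) (at_right 0)"
    by (intro eventually_all_finite pair)
  then show ?thesis
    unfolding monotone_cone_def by simp
qed

lemma neg_multiqt_grad_mono_on_ties:
  assumes "mono \<alpha>" and "i \<le> j" and "b $ i + \<theta> $ i = b $ j + \<theta> $ j"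
  shows "(- multiqt_grad \<alpha> b y \<theta>) $ i \<le> (- multiqt_grad \<alpha> b y \<theta>) $ j"
  using assms monoD[OF assms(1) assms(2)] unfolding multiqt_grad_def by simp

theorem lemma2:
  fixes \<alpha> :: "'n::{finite,linorder} \<Rightarrow> real" and b \<theta> :: "real ^ ('n::{finite,linorder})" and y :: real
  assumes "strict_mono \<alpha>"
    and "\<And>i. 0 < \<alpha> i \<and> \<alpha> i < 1"
    and "b \<in> monotone_cone"
    and "\<theta> \<in> frontier (set_shift monotone_cone b)"
  shows "- multiqt_grad \<alpha> b y \<theta> \<in> tangent_cone (set_shift monotone_cone b) \<theta>"
proof -
  have "\<theta> \<in> set_shift monotone_cone b"
    using assms(4) frontier_subset_closed[OF closed_set_shift[OF closed_monotone_cone]] by blast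
  then have x_in_cone: "b + \<theta> \<in> monotone_cone"
    by (simp add: mem_set_shift)
  have "eventually (\<lambda>\<epsilon>. b + \<theta> + \<epsilon> *\<^sub>R - multiqt_grad \<alpha> b y \<theta> \<in> monotone_cone) (at_right 0)"
    using x_in_cone strict_mono_mono[OF assms(1)]
    by (intro monotone_cone_eventually_feasible neg_multiqt_grad_mono_on_ties) auto
  with x_in_cone show ?thesis
    unfolding tangent_cone_set_shift by (rule tangent_coneI_eventually)
qed

end
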